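(* Let $\varepsilon>0$ with $1/\varepsilon$ an integer, let $n$ be a positive integer, and let $I$ be a set of at most $n$ items packed in a horizontal (respectively vertical) container $C$. Then for every integer $k\ge1/\varepsilon$ there is a set $I'\subseteq I$ with $p(I')\ge(1-\varepsilon)p(I)$ that can be packed in a horizontal (respectively vertical) container $C'$ with $w(C')\le w(C)$, $h(C')\le h(C)$, $w(C')\in WIDTHS(I)^{(k)}$ and $h(C')\in HEIGHTS(I)^{(k)}$.
   Context: Items are axis-parallel rectangles with width $w_i$, height $h_i$, profit $p(i)\ge0$; no rotations. A horizontal container is a box in which items are stacked one on top of another (their projections on the $y$-axis have pairwise disjoint interiors); a vertical container is a box in which items are placed side by side (their projections on the $x$-axis have pairwise disjoint interiors). $WIDTHS(I)=\{w_j: j\in I\}$, $HEIGHTS(I)=\{h_j:j\in I\}$. For a finite set $P$ of reals and integer $k\ge0$, $P^{(k)}=\{(p_1+\dots+p_l)+i\,p_{l+1}: p_1,\dots,p_{l+1}\in P,\ 0\le l\le k,\ i\in\{0,1,\dots,n\}\}$. *)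

theory Defs
  imports Complex_Main
begin

(* A packing of the item set I into a box
   of width W and height H (lower-left corner at the origin) assigns to each
   item the lower-left corner (x i, y i) of its placement. *)

definition horiz_container ::
  "('a \<Rightarrow> real) \<Rightarrow> ('a \<Rightarrow> real) \<Rightarrow> 'a set \<Rightarrow> real \<Rightarrow> real \<Rightarrow> bool" where
  "horiz_container w h I W H \<longleftrightarrow>
     (\<exists>x y :: 'a \<Rightarrow> real.
        (\<forall>i\<in>I. 0 \<le> x i \<and> x i + w i \<le> W \<and> 0 \<le> y i \<and> y i + h i \<le> H) \<and>
        (\<forall>i\<in>I. \<forall>j\<in>I. i \<noteq> j \<longrightarrow>
            {y i<..<y i + h i} \<inter> {y j<..<y j + h j} = {}))"

definition vert_container ::
  "('a \<Rightarrow> real) \<Rightarrow> ('a \<Rightarrow> real) \<Rightarrow> 'a set \<Rightarrow> real \<Rightarrow> real \<Rightarrow> bool" where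
  "vert_container w h I W H \<longleftrightarrow>
     (\<exists>x y :: 'a \<Rightarrow> real.
        (\<forall>i\<in>I. 0 \<le> x i \<and> x i + w i \<le> W \<and> 0 \<le> y i \<and> y i + h i \<le> H) \<and>
        (\<forall>i\<in>I. \<forall>j\<in>I. i \<noteq> j \<longrightarrow>
            {x i<..<x i + w i} \<inter> {x j<..<x j + w j} = {}))"

definition WIDTHS :: "('a \<Rightarrow> real) \<Rightarrow> 'a set \<Rightarrow> real set" where
  "WIDTHS w I = w ` I"

definition HEIGHTS :: "('a \<Rightarrow> real) \<Rightarrow> 'a set \<Rightarrow> real set" where
  "HEIGHTS h I = h ` I"

definition ext_set :: "real set \<Rightarrow> nat \<Rightarrow> nat \<Rightarrow> real set" where
  "ext_set P k n = {sum_list ps + real i * q | ps q i.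
       set ps \<subseteq> P \<and> length ps \<le> k \<and> q \<in> P \<and> i \<le> n}"

end

theory Submission
  imports Defs
begin

text \<open>
  By symmetry it suffices to treat a horizontal container. Its items can always be restacked
  flush on top of each other, so such a packing exists iff every width is at most the container
  width and the heights sum to at most the container height. The width is rounded down to the
  largest item width. For the height, let \<open>m = 1/\<epsilon>\<close>; if there are at least \<open>m\<close> items,
  drop the least profitable \<open>r\<close> among the \<open>m\<close> tallest ones, losing at most \<open>\<epsilon> p(I)\<close>.
  The remaining \<open>m - 1\<close> tall items keep their heights, while the total height \<open>S\<close> of the
  short items (each at most \<open>h r\<close>) is replaced by the least multiple \<open>c h r\<close> exceeding \<open>S\<close>.
  Since \<open>c h r \<le> S + h r\<close>, the new height does not exceed the old total height, and
  \<open>c\<close> is at most the number of short items plus one, hence at most \<open>n\<close>.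
\<close>

lemma finite_obtains_max:
  fixes f :: "'a \<Rightarrow> 'b::linorder"
  assumes "finite A" "A \<noteq> {}"
  obtains a where "a \<in> A" "\<forall>j\<in>A. f j \<le> f a"
proof -
  have "Max (f ` A) \<in> f ` A" using assms by simp
  then obtain a where a: "a \<in> A" "f a = Max (f ` A)" by (metis imageE)
  show thesis using that[OF a(1)] a(2) assms(1) by simp
qed

lemma finite_obtains_min:
  fixes f :: "'a \<Rightarrow> 'b::linorder"
  assumes "finite A" "A \<noteq> {}"
  obtains a where "a \<in> A" "\<forall>j\<in>A. f a \<le> f j"
proof -
  have "Min (f ` A) \<in> f ` A" using assms by simp
  then obtain a where a: "a \<in> A" "f a = Min (f ` A)" by (metis imageE)
  show thesis using that[OF a(1)] a(2) assms(1) by simp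
qed

lemma disjoint_intervals_le:
  fixes a b c d :: real
  assumes "{a<..<a + b} \<inter> {c<..<c + d} = {}" "0 < b" "0 < d" "c \<le> a"
  shows "c + d \<le> a"
proof (rule ccontr)
  assume "\<not> c + d \<le> a"
  then have "(a + min (a + b) (c + d)) / 2 \<in> {a<..<a + b} \<inter> {c<..<c + d}"
    using assms(2-4) by (simp add: min_def)
  with assms(1) show False by blast
qed

lemma stacked_heights_sum_le:
  fixes h y :: "'a \<Rightarrow> real"
  assumes "finite J" "0 \<le> H"
    and bounds: "\<forall>i\<in>J. 0 < h i \<and> 0 \<le> y i \<and> y i + h i \<le> H"
    and disj: "\<forall>i\<in>J. \<forall>j\<in>J. i \<noteq> j \<longrightarrow> {y i<..<y i + h i} \<inter> {y j<..<y j + h j} = {}"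
  shows "sum h J \<le> H"
proof -
  have "\<forall>H. 0 \<le> H \<longrightarrow> (\<forall>i\<in>J. y i + h i \<le> H) \<longrightarrow> sum h J \<le> H"
    using assms(1)
  proof (induction J rule: finite_remove_induct)
    case (remove A)
    obtain a where a: "a \<in> A" "\<forall>j\<in>A. y j \<le> y a"
      using finite_obtains_max[OF remove(1,2), of y] by blast
    have below_a: "\<forall>j\<in>A - {a}. y j + h j \<le> y a"
      using a remove(3) disj bounds disjoint_intervals_le by (metis DiffE insertI1 subsetD)
    show ?case
    proof (intro allI impI)
      fix H assume "\<forall>i\<in>A. y i + h i \<le> H"
      have "sum h (A - {a}) \<le> y a"
        using remove.IH[OF a(1)] below_a bounds a(1) remove(3) by blast
      moreover have "sum h A = h a + sum h (A - {a})"
        using sum.remove[OF remove(1) a(1)] .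
      ultimately show "sum h A \<le> H" using \<open>\<forall>i\<in>A. y i + h i \<le> H\<close> a(1) by fastforce
    qed
  qed simp
  then show ?thesis using assms(2) bounds by blast
qed

lemma horiz_container_stack:
  fixes w h :: "'a \<Rightarrow> real"
  assumes "finite J" "\<forall>i\<in>J. 0 \<le> h i \<and> w i \<le> W" "sum h J \<le> H"
  shows "horiz_container w h J W H"
  using assms
proof (induction J arbitrary: H rule: finite_induct)
  case empty
  then show ?case unfolding horiz_container_def by auto
next
  case (insert a J)
  then have "horiz_container w h J W (H - h a)" by simp
  then obtain x y where
      xy: "\<forall>i\<in>J. 0 \<le> x i \<and> x i + w i \<le> W \<and> 0 \<le> y i \<and> y i + h i \<le> H - h a"
    and disj: "\<forall>i\<in>J. \<forall>j\<in>J. i \<noteq> j \<longrightarrow> {y i<..<y i + h i} \<inter> {y j<..<y j + h j} = {}"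
    unfolding horiz_container_def by blast
  have "0 \<le> sum h J" using insert.prems(1) by (intro sum_nonneg) auto
  define y' where "y' = y(a := H - h a)"
  have bounds: "\<forall>i\<in>insert a J. 0 \<le> (0::real) \<and> 0 + w i \<le> W \<and> 0 \<le> y' i \<and> y' i + h i \<le> H"
    using \<open>0 \<le> sum h J\<close> xy insert by (auto simp: y'_def)
  have top: "{y j<..<y j + h j} \<inter> {H - h a<..<H - h a + h a} = {}" if "j \<in> J" for j
    using xy that by auto
  have disj': "\<forall>i\<in>insert a J. \<forall>j\<in>insert a J. i \<noteq> j \<longrightarrow>
      {y' i<..<y' i + h i} \<inter> {y' j<..<y' j + h j} = {}"
    using top disj insert.hyps(2) unfolding y'_def by (simp add: min.commute max.commute)
  show ?case
    unfolding horiz_container_def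
    by (intro exI[of _ "\<lambda>_. 0"] exI[of _ y'] conjI) (rule bounds, rule disj')
qed

lemma vert_container_iff_horiz_container:
  "vert_container w h J W H \<longleftrightarrow> horiz_container h w J H W"
  unfolding vert_container_def horiz_container_def
  by (subst ex_comm) (simp only: conj_ac)

lemma exists_subset_of_largest:
  fixes f :: "'a \<Rightarrow> 'b::linorder"
  assumes "finite I" "m \<le> card I"
  shows "\<exists>M\<subseteq>I. card M = m \<and> (\<forall>i\<in>I - M. \<forall>j\<in>M. f i \<le> f j)"
  using assms(2)
proof (induction m)
  case (Suc m)
  then obtain M where M: "M \<subseteq> I" "card M = m" "\<forall>i\<in>I - M. \<forall>j\<in>M. f i \<le> f j"
    by auto
  have "I - M \<noteq> {}" using M Suc.prems by auto
  then obtain a where a: "a \<in> I - M" "\<forall>i\<in>I - M. f i \<le> f a"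
    using finite_obtains_max[of "I - M" f] assms(1) by blast
  have "card (insert a M) = Suc m" using a M finite_subset[OF M(1) assms(1)] by auto
  then show ?case using M a by (intro exI[of _ "insert a M"]) auto
qed (intro exI[of _ "{}"], simp)

lemma exists_member_card_mult_le_sum:
  fixes p :: "'a \<Rightarrow> real"
  assumes "finite I" "M \<subseteq> I" "M \<noteq> {}" "\<forall>i\<in>I. 0 \<le> p i"
  obtains r where "r \<in> M" "real (card M) * p r \<le> sum p I"
proof -
  obtain r where r: "r \<in> M" "\<forall>j\<in>M. p r \<le> p j"
    using finite_obtains_min[of M p] finite_subset[OF assms(2,1)] assms(3) by blast
  have "real (card M) * p r \<le> sum p M" using sum_bounded_below[of M "p r" p] r(2) by auto
  also have "\<dots> \<le> sum p I" using sum_mono2[OF assms(1,2)] assms(2,4) by auto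
  finally show thesis using that r(1) by blast
qed

lemma exists_cheap_item_among_largest:
  fixes h p :: "'a \<Rightarrow> real"
  assumes fin: "finite I" and m: "0 < m" "m \<le> card I" and prof: "\<forall>i\<in>I. 0 \<le> p i"
  obtains r T where "r \<in> I" "T \<subseteq> I - {r}" "card T < m"
    "\<forall>i\<in>I - insert r T. h i \<le> h r" "real m * p r \<le> sum p I"
proof -
  obtain M where M: "M \<subseteq> I" "card M = m" "\<forall>i\<in>I - M. \<forall>j\<in>M. h i \<le> h j"
    using exists_subset_of_largest[OF fin m(2)] by blast
  have "M \<noteq> {}" using M(2) m(1) by auto
  then obtain r where r: "r \<in> M" "real (card M) * p r \<le> sum p I"
    by (rule exists_member_card_mult_le_sum[OF fin M(1) _ prof])
  have "finite M" using M(1) fin finite_subset by blast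
  then have "card (M - {r}) < m" using M(2) r(1) m(1) by simp
  moreover have "I - insert r (M - {r}) = I - M" using r(1) by blast
  ultimately show thesis
    using that[of r "M - {r}"] M r by blast
qed

lemma exists_multiple_between:
  fixes a S :: real
  assumes "0 < a" "0 \<le> S" "S \<le> real N * a"
  obtains c :: nat where "S < real c * a" "real c * a \<le> S + a" "c \<le> N + 1"
proof -
  define c where "c = nat \<lfloor>S / a\<rfloor> + 1"
  have c: "real c = of_int \<lfloor>S / a\<rfloor> + 1" using assms(1,2) by (simp add: c_def)
  have "S / a < real c" "real c \<le> S / a + 1" using c by linarith+
  then have "S < real c * a" "real c * a \<le> S + a"
    using assms(1) by (simp_all add: field_simps)
  moreover have "S / a \<le> real N" using assms(1,3) by (simp add: field_simps)
  then have "c \<le> N + 1" using c by linarith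
  ultimately show thesis using that by blast
qed

lemma sum_plus_multiple_in_ext_set:
  assumes "finite T" "f ` T \<subseteq> P" "card T \<le> k" "q \<in> P" "c \<le> n"
  shows "sum f T + real c * q \<in> ext_set P k n"
proof -
  obtain xs where xs: "set xs = T" "distinct xs" using finite_distinct_list[OF assms(1)] by blast
  have "sum_list (map f xs) = sum f T" using xs by (simp add: sum_list_distinct_conv_sum_set)
  moreover have "length (map f xs) \<le> k" using distinct_card[OF xs(2)] xs(1) assms(3) by simp
  ultimately show ?thesis
    unfolding ext_set_def using xs(1) assms(2,4,5)
    by (intro CollectI exI[of _ "map f xs"] exI[of _ q] exI[of _ c]) auto
qed

lemma exists_rounded_height:
  fixes h p :: "'a \<Rightarrow> real"
  assumes fin: "finite I" and ne: "I \<noteq> {}" and card_le: "card I \<le> n"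
    and pos: "\<forall>i\<in>I. 0 < h i" and prof: "\<forall>i\<in>I. 0 \<le> p i"
    and m: "0 < m" "m \<le> k"
  obtains I' H' where "I' \<subseteq> I" "(1 - 1 / real m) * sum p I \<le> sum p I'"
    "sum h I' \<le> H'" "H' \<le> sum h I" "H' \<in> ext_set (h ` I) k n"
proof (cases "m \<le> card I")
  case False
  obtain q where "q \<in> I" using ne by blast
  then have "sum h I + real 0 * h q \<in> ext_set (h ` I) k n"
    using False m(2) fin by (intro sum_plus_multiple_in_ext_set) auto
  moreover have "(1 - 1 / real m) * sum p I \<le> sum p I"
    using sum_nonneg[of I p] prof by (simp add: algebra_simps)
  ultimately show thesis using that[of I "sum h I"] by simp
next
  case True
  obtain r T where r: "r \<in> I" "T \<subseteq> I - {r}" "card T < m"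
      "\<forall>i\<in>I - insert r T. h i \<le> h r" "real m * p r \<le> sum p I"
    by (rule exists_cheap_item_among_largest[OF fin m(1) True prof])
  define R where "R = I - insert r T"
  have finR: "finite R" and finT: "finite T"
    using fin r(2) finite_subset unfolding R_def by auto
  have "0 < h r" using pos r(1) by blast
  moreover have "0 \<le> sum h R" using pos unfolding R_def by (intro sum_nonneg) auto
  moreover have "sum h R \<le> real (card R) * h r"
    using sum_bounded_above[of R h "h r"] r(4) unfolding R_def by auto
  ultimately obtain c where
    c: "sum h R < real c * h r" "real c * h r \<le> sum h R + h r" "c \<le> card R + 1"
    by (rule exists_multiple_between)
  have "card (insert r R) \<le> card I" using fin r(1) unfolding R_def by (intro card_mono) auto
  then have "c \<le> n" using c(3) card_le finR unfolding R_def by simp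
  have split: "I - {r} = T \<union> R" "T \<inter> R = {}" using r(2) unfolding R_def by auto
  have height_split: "sum h (I - {r}) = sum h T + sum h R"
    using sum.union_disjoint[OF finT finR split(2)] split(1) by simp
  have "p r \<le> sum p I / real m" using r(5) m(1) by (simp add: field_simps)
  then have profit: "(1 - 1 / real m) * sum p I \<le> sum p (I - {r})"
    using sum_diff1[of I p r] fin r(1) by (simp add: algebra_simps)
  have "sum h T + real c * h r \<in> ext_set (h ` I) k n"
    using finT r(1-3) m(2) \<open>c \<le> n\<close> by (intro sum_plus_multiple_in_ext_set) auto
  moreover have "sum h I = h r + sum h (I - {r})" using sum.remove[OF fin r(1)] .
  ultimately show thesis
    using that[of "I - {r}" "sum h T + real c * h r"] profit height_split c(1,2) by auto
qed

lemma horiz_container_rounded: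
  fixes w h p :: "'a \<Rightarrow> real"
  assumes fin: "finite I" and ne: "I \<noteq> {}" and card_le: "card I \<le> n"
    and heights: "\<forall>i\<in>I. 0 < h i" and prof: "\<forall>i\<in>I. p i \<ge> 0"
    and m: "0 < m" "m \<le> k"
    and hc: "horiz_container w h I W H"
  obtains I' W' H' where "I' \<subseteq> I" "(1 - 1 / real m) * sum p I \<le> sum p I'"
    "horiz_container w h I' W' H'" "W' \<le> W" "H' \<le> H"
    "W' \<in> ext_set (WIDTHS w I) k n" "H' \<in> ext_set (HEIGHTS h I) k n"
proof -
  obtain x y where
      xy: "\<forall>i\<in>I. 0 \<le> x i \<and> x i + w i \<le> W \<and> 0 \<le> y i \<and> y i + h i \<le> H"
    and disj: "\<forall>i\<in>I. \<forall>j\<in>I. i \<noteq> j \<longrightarrow> {y i<..<y i + h i} \<inter> {y j<..<y j + h j} = {}"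
    using hc unfolding horiz_container_def by blast
  obtain a where a: "a \<in> I" "\<forall>j\<in>I. w j \<le> w a"
    using finite_obtains_max[OF fin ne] by blast
  have "0 \<le> H" using xy heights a(1) by force
  then have "sum h I \<le> H"
    using stacked_heights_sum_le[OF fin _ _ disj] xy heights by blast
  obtain I' H' where I': "I' \<subseteq> I" "(1 - 1 / real m) * sum p I \<le> sum p I'"
      "sum h I' \<le> H'" "H' \<le> sum h I" "H' \<in> ext_set (h ` I) k n"
    by (rule exists_rounded_height[OF fin ne card_le heights prof m])
  have "horiz_container w h I' (w a) H'"
    using finite_subset[OF I'(1) fin] I'(1,3) heights a(2)
    by (intro horiz_container_stack) force+
  moreover have "w a \<le> W" using xy a(1) by force
  moreover have "0 < card I" using fin ne by (simp add: card_gt_0_iff)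
  then have "sum w {} + real 1 * w a \<in> ext_set (w ` I) k n"
    using a(1) card_le by (intro sum_plus_multiple_in_ext_set) auto
  ultimately show thesis
    using that[of I' "w a" H'] I' \<open>sum h I \<le> H\<close> unfolding WIDTHS_def HEIGHTS_def by auto
qed

lemma vert_container_rounded:
  fixes w h p :: "'a \<Rightarrow> real"
  assumes fin: "finite I" and ne: "I \<noteq> {}" and card_le: "card I \<le> n"
    and widths: "\<forall>i\<in>I. 0 < w i" and prof: "\<forall>i\<in>I. p i \<ge> 0"
    and m: "0 < m" "m \<le> k"
    and vc: "vert_container w h I W H"
  obtains I' W' H' where "I' \<subseteq> I" "(1 - 1 / real m) * sum p I \<le> sum p I'"
    "vert_container w h I' W' H'" "W' \<le> W" "H' \<le> H"
    "W' \<in> ext_set (WIDTHS w I) k n" "H' \<in> ext_set (HEIGHTS h I) k n"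
proof -
  have "horiz_container h w I H W" using vc by (simp add: vert_container_iff_horiz_container)
  then obtain I' H' W' where "I' \<subseteq> I" "(1 - 1 / real m) * sum p I \<le> sum p I'"
      "horiz_container h w I' H' W'" "H' \<le> H" "W' \<le> W"
      "H' \<in> ext_set (WIDTHS h I) k n" "W' \<in> ext_set (HEIGHTS w I) k n"
    using horiz_container_rounded[OF fin ne card_le widths prof m] by metis
  then show thesis
    using that[of I' W' H'] unfolding vert_container_iff_horiz_container WIDTHS_def HEIGHTS_def
    by blast
qed

theorem mainTheorem17:
  fixes \<epsilon> :: real and n :: nat
    and w h p :: "'a \<Rightarrow> real" and I :: "'a set" and W H :: real
  assumes eps_pos: "\<epsilon> > 0"
    and eps_int: "\<exists>m::nat. 1 / \<epsilon> = real m"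
    and n_pos: "n > 0"
    and fin: "finite I" and nonempty: "I \<noteq> {}" and card_le: "card I \<le> n"
    and dims: "\<forall>i\<in>I. w i > 0 \<and> h i > 0"
    and prof: "\<forall>i\<in>I. p i \<ge> 0"
  shows "(horiz_container w h I W H \<longrightarrow>
            (\<forall>k::nat. real k \<ge> 1 / \<epsilon> \<longrightarrow>
              (\<exists>I' W' H'. I' \<subseteq> I \<and> sum p I' \<ge> (1 - \<epsilon>) * sum p I \<and>
                 horiz_container w h I' W' H' \<and> W' \<le> W \<and> H' \<le> H \<and>
                 W' \<in> ext_set (WIDTHS w I) k n \<and> H' \<in> ext_set (HEIGHTS h I) k n)))
       \<and> (vert_container w h I W H \<longrightarrow>
            (\<forall>k::nat. real k \<ge> 1 / \<epsilon> \<longrightarrow>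
              (\<exists>I' W' H'. I' \<subseteq> I \<and> sum p I' \<ge> (1 - \<epsilon>) * sum p I \<and>
                 vert_container w h I' W' H' \<and> W' \<le> W \<and> H' \<le> H \<and>
                 W' \<in> ext_set (WIDTHS w I) k n \<and> H' \<in> ext_set (HEIGHTS h I) k n)))"
proof -
  obtain m :: nat where m: "1 / \<epsilon> = real m" using eps_int by blast
  have "0 < m" using m eps_pos by (metis of_nat_0_less_iff zero_less_divide_1_iff)
  have eps: "\<epsilon> = 1 / real m" by (simp flip: m)
  have heights: "\<forall>i\<in>I. 0 < h i" and widths: "\<forall>i\<in>I. 0 < w i" using dims by auto
  show ?thesis
  proof (intro conjI impI allI)
    fix k :: nat assume hc: "horiz_container w h I W H" and "real k \<ge> 1 / \<epsilon>"
    then have "m \<le> k" using m by simp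
    show "\<exists>I' W' H'. I' \<subseteq> I \<and> sum p I' \<ge> (1 - \<epsilon>) * sum p I \<and>
        horiz_container w h I' W' H' \<and> W' \<le> W \<and> H' \<le> H \<and>
        W' \<in> ext_set (WIDTHS w I) k n \<and> H' \<in> ext_set (HEIGHTS h I) k n"
      unfolding eps
      by (rule horiz_container_rounded[OF fin nonempty card_le heights prof \<open>0 < m\<close> \<open>m \<le> k\<close> hc]) blast
  next
    fix k :: nat assume vc: "vert_container w h I W H" and "real k \<ge> 1 / \<epsilon>"
    then have "m \<le> k" using m by simp
    show "\<exists>I' W' H'. I' \<subseteq> I \<and> sum p I' \<ge> (1 - \<epsilon>) * sum p I \<and>
        vert_container w h I' W' H' \<and> W' \<le> W \<and> H' \<le> H \<and>
        W' \<in> ext_set (WIDTHS w I) k n \<and> H' \<in> ext_set (HEIGHTS h I) k n"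
      unfolding eps
      by (rule vert_container_rounded[OF fin nonempty card_le widths prof \<open>0 < m\<close> \<open>m \<le> k\<close> vc]) blast
  qed
qed

end
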